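(* For every instance $(A,C,k)$, every committee $W$ that the Greedy Justified Candidate Rule (GJCR) can output (under any tie-breaking), and every AV-completion $\overline{W}$ of $W$, the utilitarian ratio of $\overline{W}$ is at least $\frac{2}{\sqrt{k}}-\frac1k$.
   Context: An instance $(A,C,k)$ consists of a finite nonempty candidate set $C$, voters $N=\{1,\dots,n\}$, approval sets $A_i\subseteq C$, and a committee size $1\le k\le|C|$. $N_c=\{i: c\in A_i\}$. $\mathrm{sw}(W)=\sum_i|A_i\cap W|$; the utilitarian ratio of a committee $W$ ($|W|\le k$) is $\mathrm{sw}(W)/\max\{\mathrm{sw}(W'):|W'|=k\}$. GJCR starts with $W=\emptyset$ and repeatedly does the following: if there exist $c\in C\setminus W$, $\ell\in\{1,\dots,k\}$ and $N'\subseteq N_c$ with $|N'|\ge\ell n/k$ and $|A_i\cap W|<\ell$ for all $i\in N'$, it picks such a triple with $|N'|$ maximum (ties broken arbitrarily) and adds $c$ to $W$; otherwise it terminates and outputs $W$. An AV-completion of $W$ is $W\cup T$ with $T\subseteq C\setminus W$, $|T|=k-|W|$, maximizing $\sum_{c\in T}|N_c|$. *)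

theory Defs
  imports Complex_Main
begin

definition voters :: "nat \<Rightarrow> nat set" where
  "voters n = {1..n}"

definition is_instance :: "'c set \<Rightarrow> nat \<Rightarrow> (nat \<Rightarrow> 'c set) \<Rightarrow> nat \<Rightarrow> bool" where
  "is_instance C n A k \<longleftrightarrow> finite C \<and> C \<noteq> {} \<and> (\<forall>i\<in>voters n. A i \<subseteq> C)
     \<and> 1 \<le> k \<and> k \<le> card C"

definition supporters :: "nat \<Rightarrow> (nat \<Rightarrow> 'c set) \<Rightarrow> 'c \<Rightarrow> nat set" where
  "supporters n A c = {i \<in> voters n. c \<in> A i}"

definition sw :: "nat \<Rightarrow> (nat \<Rightarrow> 'c set) \<Rightarrow> 'c set \<Rightarrow> nat" where
  "sw n A W = (\<Sum>i\<in>voters n. card (A i \<inter> W))"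

definition opt_sw :: "'c set \<Rightarrow> nat \<Rightarrow> (nat \<Rightarrow> 'c set) \<Rightarrow> nat \<Rightarrow> nat" where
  "opt_sw C n A k = Max {sw n A W' | W'. W' \<subseteq> C \<and> card W' = k}"

definition util_ratio :: "'c set \<Rightarrow> nat \<Rightarrow> (nat \<Rightarrow> 'c set) \<Rightarrow> nat \<Rightarrow> 'c set \<Rightarrow> real" where
  "util_ratio C n A k W = real (sw n A W) / real (opt_sw C n A k)"

definition gjcr_triple :: "'c set \<Rightarrow> nat \<Rightarrow> (nat \<Rightarrow> 'c set) \<Rightarrow> nat \<Rightarrow> 'c set
    \<Rightarrow> 'c \<Rightarrow> nat \<Rightarrow> nat set \<Rightarrow> bool" where
  "gjcr_triple C n A k W c l N' \<longleftrightarrow>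
     c \<in> C - W \<and> 1 \<le> l \<and> l \<le> k \<and> N' \<subseteq> supporters n A c
     \<and> real (card N') \<ge> real l * real n / real k
     \<and> (\<forall>i\<in>N'. card (A i \<inter> W) < l)"

definition gjcr_step :: "'c set \<Rightarrow> nat \<Rightarrow> (nat \<Rightarrow> 'c set) \<Rightarrow> nat \<Rightarrow> 'c set \<Rightarrow> 'c set \<Rightarrow> bool" where
  "gjcr_step C n A k W W' \<longleftrightarrow>
     (\<exists>c l N'. gjcr_triple C n A k W c l N'
        \<and> (\<forall>c2 l2 N2. gjcr_triple C n A k W c2 l2 N2 \<longrightarrow> card N2 \<le> card N')
        \<and> W' = insert c W)"

inductive gjcr_reach :: "'c set \<Rightarrow> nat \<Rightarrow> (nat \<Rightarrow> 'c set) \<Rightarrow> nat \<Rightarrow> 'c set \<Rightarrow> bool"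
  for C n A k where
  start: "gjcr_reach C n A k {}"
| step: "gjcr_reach C n A k W \<Longrightarrow> gjcr_step C n A k W W' \<Longrightarrow> gjcr_reach C n A k W'"

definition gjcr_output :: "'c set \<Rightarrow> nat \<Rightarrow> (nat \<Rightarrow> 'c set) \<Rightarrow> nat \<Rightarrow> 'c set \<Rightarrow> bool" where
  "gjcr_output C n A k W \<longleftrightarrow> gjcr_reach C n A k W
     \<and> \<not> (\<exists>c l N'. gjcr_triple C n A k W c l N')"

definition av_completion :: "'c set \<Rightarrow> nat \<Rightarrow> (nat \<Rightarrow> 'c set) \<Rightarrow> nat \<Rightarrow> 'c set \<Rightarrow> 'c set \<Rightarrow> bool" where
  "av_completion C n A k W Wb \<longleftrightarrow>
     (\<exists>T. T \<subseteq> C - W \<and> card T = k - card W \<and> Wb = W \<union> T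
        \<and> (\<forall>T'. T' \<subseteq> C - W \<and> card T' = k - card W \<longrightarrow>
              (\<Sum>c\<in>T'. card (supporters n A c)) \<le> (\<Sum>c\<in>T. card (supporters n A c))))"

end

(* Let q = n/k and let B be the largest support |N_c| of a candidate c outside W.
   Replacing the AV-completion by an optimal committee gains at most B - min(|N_c|, B) for
   each member c of W, while the a members of W with support at least B contribute B each
   and every other member at least q. Charging the unit cost of each selected candidate
   equally to its group N' keeps every voter's load at most k/n; since the group sizes
   never increase along a run, this yields B < (a + 1) q, and a q >= B once |W| = k.
   Minimising the resulting quadratic in B/q gives the ratio 2/sqrt k - 1/k. *)

theory Submission
  imports Defs
begin

section \<open>Weights of committees\<close>

lemma sw_eq_sum_card_supporters:
  assumes "finite X"
  shows "sw n A X = (\<Sum>c\<in>X. card (supporters n A c))"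
proof -
  have "sw n A X = (\<Sum>i\<in>voters n. \<Sum>c\<in>X. if c \<in> A i then 1 else 0)"
    unfolding sw_def
    by (rule sum.cong, simp, subst sum.If_cases, use assms in \<open>auto simp: Int_commute\<close>)
  also have "\<dots> = (\<Sum>c\<in>X. \<Sum>i\<in>voters n. if c \<in> A i then 1 else 0)"
    by (rule sum.swap)
  also have "\<dots> = (\<Sum>c\<in>X. card (supporters n A c))"
    unfolding supporters_def
    by (rule sum.cong, simp, subst sum.If_cases, auto simp: voters_def intro!: arg_cong[where f=card])
  finally show ?thesis .
qed

lemma card_supporters_le: "card (supporters n A c) \<le> n"
proof -
  have "supporters n A c \<subseteq> voters n" by (auto simp: supporters_def)
  then show ?thesis using card_mono[of "voters n"] by (simp add: voters_def)
qed

lemma opt_sw_attained: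
  assumes "is_instance C n A k"
  obtains Wo where "Wo \<subseteq> C" "card Wo = k" "opt_sw C n A k = sw n A Wo"
proof -
  let ?S = "{W'. W' \<subseteq> C \<and> card W' = k}"
  have "finite C" "k \<le> card C" using assms by (auto simp: is_instance_def)
  then have "finite (sw n A ` ?S)" "?S \<noteq> {}"
    by (simp, metis (mono_tags, lifting) empty_iff mem_Collect_eq obtain_subset_with_card_n)
  then have "Max (sw n A ` ?S) \<in> sw n A ` ?S" by simp
  moreover have "opt_sw C n A k = Max (sw n A ` ?S)"
    unfolding opt_sw_def by (simp add: setcompr_eq_image)
  ultimately show thesis using that by auto
qed

lemma max_weight_subset_ge_member:
  fixes f :: "'a \<Rightarrow> real"
  assumes "finite S" "T \<subseteq> S" "T \<noteq> {}" "c \<in> S" "\<forall>x\<in>S. 0 \<le> f x"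
    and T_max: "\<And>T'. T' \<subseteq> S \<Longrightarrow> card T' = card T \<Longrightarrow> sum f T' \<le> sum f T"
  shows "f c \<le> sum f T"
proof -
  have fin: "finite T" using assms(1,2) by (rule finite_subset[rotated])
  obtain t where t: "t \<in> T" using \<open>T \<noteq> {}\<close> by auto
  let ?T' = "if c \<in> T then T else insert c (T - {t})"
  have sub: "?T' \<subseteq> S" using assms(2,4) by auto
  moreover have "card ?T' = card T"
    using fin t card_Suc_Diff1[OF fin t] by (simp del: card_Diff_insert)
  ultimately have "sum f ?T' \<le> sum f T" by (rule T_max)
  moreover have "f c \<le> sum f ?T'"
    using fin sub assms(5) by (intro member_le_sum) auto
  ultimately show ?thesis by linarith
qed

lemma sum_le_max_weight_completion:
  fixes f :: "'a \<Rightarrow> real"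
  assumes "finite C" "W \<subseteq> C" "card W \<le> k" "T \<subseteq> C - W" "card T = k - card W"
    and T_max: "\<And>T'. T' \<subseteq> C - W \<Longrightarrow> card T' = k - card W \<Longrightarrow> sum f T' \<le> sum f T"
    and B: "\<And>c. c \<in> C - W \<Longrightarrow> f c \<le> B"
    and Wo: "Wo \<subseteq> C" "card Wo = k"
  shows "sum f Wo \<le> sum f W + sum f T + (\<Sum>c\<in>W. B - min (f c) B)"
proof -
  define U where "U = Wo - W"
  have fin: "finite W" "finite Wo" "finite U"
    using finite_subset[OF assms(2,1)] finite_subset[OF Wo(1) assms(1)] by (simp_all add: U_def)
  have "card (Wo \<inter> W) \<le> card W" using fin(1) by (simp add: card_mono)
  moreover have card_U: "card U = k - card (Wo \<inter> W)"
    unfolding U_def using card_Diff_subset_Int[of Wo W] fin(2) Wo(2) by (simp add: Int_commute)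
  ultimately have "k - card W \<le> card U" by simp
  then obtain T2 where T2: "T2 \<subseteq> U" "card T2 = k - card W"
    by (metis obtain_subset_with_card_n)
  have "T2 \<subseteq> C - W" using T2(1) Wo(1) by (auto simp: U_def)
  then have T2_le: "sum f T2 \<le> sum f T" using T_max T2(2) by blast
  have "card (U - T2) = card U - card T2"
    using T2(1) fin(3) by (simp add: card_Diff_subset finite_subset)
  also have "\<dots> = card W - card (Wo \<inter> W)"
    using card_U T2(2) \<open>card (Wo \<inter> W) \<le> card W\<close> assms(3) by simp
  also have "\<dots> = card (W - Wo)"
    using fin(1) card_Diff_subset_Int[of W Wo] by (simp add: Int_commute)
  finally have card_rest: "card (U - T2) = card (W - Wo)" .
  have "\<forall>c\<in>U - T2. f c \<le> B" using B Wo(1) by (auto simp: U_def)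
  then have "sum f (U - T2) \<le> (\<Sum>c\<in>W - Wo. B)"
    using sum_bounded_above[of "U - T2" f B] card_rest by simp
  moreover have "sum f Wo = sum f (Wo \<inter> W) + sum f T2 + sum f (U - T2)"
    using sum.Int_Diff[of Wo f W] sum.subset_diff[OF T2(1) fin(3), of f] fin(2)
    by (simp add: U_def)
  moreover have "sum f W = sum f (Wo \<inter> W) + sum f (W - Wo)"
    using sum.Int_Diff[of W f Wo] fin(1) by (simp add: Int_commute)
  moreover have "(\<Sum>c\<in>W - Wo. B - f c) = (\<Sum>c\<in>W - Wo. B) - sum f (W - Wo)"
    by (rule sum_subtractf)
  ultimately have "sum f Wo \<le> sum f W + sum f T + (\<Sum>c\<in>W - Wo. B - f c)"
    using T2_le by linarith
  also have "(\<Sum>c\<in>W - Wo. B - f c) \<le> (\<Sum>c\<in>W - Wo. B - min (f c) B)"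
    by (intro sum_mono) auto
  also have "\<dots> \<le> (\<Sum>c\<in>W. B - min (f c) B)"
    using fin(1) by (intro sum_mono2) auto
  finally show ?thesis by simp
qed

lemma sum_min_threshold_ge:
  fixes f :: "'a \<Rightarrow> real" and q B :: real
  assumes "finite W" "\<forall>c\<in>W. q \<le> f c"
  shows "card {c\<in>W. B \<le> f c} * B + (real (card W) - card {c\<in>W. B \<le> f c}) * q
    \<le> (\<Sum>c\<in>W. min (f c) B)"
proof -
  let ?H = "{c\<in>W. B \<le> f c}"
  have "card ?H * B = (\<Sum>c\<in>?H. min (f c) B)" by simp
  moreover have "card (W - ?H) * q \<le> (\<Sum>c\<in>W - ?H. min (f c) B)"
  proof (rule sum_bounded_below)
    fix c assume "c \<in> W - ?H"
    then show "q \<le> min (f c) B" using assms(2) by fastforce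
  qed
  moreover have "(real (card W) - card ?H) * q = card (W - ?H) * q"
    using assms(1) card_mono[of W ?H] by (subst card_Diff_subset) auto
  moreover have "(\<Sum>c\<in>W. min (f c) B) = (\<Sum>c\<in>W - ?H. min (f c) B) + (\<Sum>c\<in>?H. min (f c) B)"
    using assms(1) by (intro sum.subset_diff) auto
  ultimately show ?thesis by linarith
qed

section \<open>The tradeoff inequality\<close>

lemma sqrt_guarantee_bounds:
  fixes x :: real
  assumes "1 \<le> x"
  shows "0 \<le> 2 / sqrt x - 1 / x" "2 / sqrt x - 1 / x \<le> 1"
proof -
  define s where "s = sqrt x"
  have s: "1 \<le> s" "2 / sqrt x - 1 / x = 2 / s - 1 / s\<^sup>2"
    using assms by (auto simp: s_def)
  have "2 / s - 1 / s\<^sup>2 = (2 * s - 1) / s\<^sup>2" "1 - (2 / s - 1 / s\<^sup>2) = (s - 1)\<^sup>2 / s\<^sup>2"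
    using s(1) by (simp_all add: field_simps power2_eq_square)
  moreover have "0 \<le> (2 * s - 1) / s\<^sup>2" "0 \<le> (s - 1)\<^sup>2 / s\<^sup>2" using s(1) by simp_all
  ultimately show "0 \<le> 2 / sqrt x - 1 / x" "2 / sqrt x - 1 / x \<le> 1"
    unfolding s(2) by linarith+
qed

lemma full_tradeoff:
  fixes \<rho> s q B a Y :: real
  assumes "\<rho> * s\<^sup>2 = 2 * s - 1" "0 < q" "q \<le> B" "B \<le> a * q"
    and "a * B + (s\<^sup>2 - a) * q \<le> Y"
  shows "\<rho> * s\<^sup>2 * B \<le> Y"
proof -
  have "\<rho> * s\<^sup>2 * B \<le> (2 * s - 1) * B + (B - s * q)\<^sup>2 / q"
    using assms(1,2) by simp
  also have "\<dots> = B / q * (B - q) + s\<^sup>2 * q"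
    using assms(2) by (simp add: field_simps power2_eq_square)
  also have "\<dots> \<le> a * (B - q) + s\<^sup>2 * q"
    using assms(2-4) by (intro add_right_mono mult_right_mono) (simp_all add: pos_divide_le_eq)
  also have "\<dots> \<le> Y" using assms(5) by (simp add: algebra_simps)
  finally show ?thesis .
qed

lemma partial_tradeoff:
  fixes \<rho> s q B a w Y :: real
  assumes \<rho>: "\<rho> * s\<^sup>2 = 2 * s - 1" "\<rho> \<le> 1" and "0 < q" "q \<le> B"
    and "a \<le> w" "w \<le> s\<^sup>2 - 1" "B < (a + 1) * q"
    and Y: "a * B + (w - a) * q \<le> Y"
  shows "\<rho> * w * B \<le> Y + (1 - \<rho>) * B"
proof -
  have "(B - q) / q * (B - q) \<le> a * (B - q)"
    using assms(3,4,7) by (intro mult_right_mono) (simp_all add: divide_le_eq algebra_simps)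
  then have lower: "(B - q) / q * (B - q) + w * (q - \<rho> * B) + (1 - \<rho>) * B
      \<le> Y + (1 - \<rho>) * B - \<rho> * w * B"
    using Y by (simp add: algebra_simps)
  txt \<open>The lower bound is affine in w, so by the sign of its slope it suffices to
    check it at w = (B - q) / q or at w = s^2 - 1.\<close>
  show ?thesis
  proof (cases "0 \<le> q - \<rho> * B")
    case True
    have "(B - q) / q < a" using assms(3,7) by (simp add: divide_less_eq algebra_simps)
    then have "(B - q) / q \<le> w" using assms(5) by linarith
    then have "(B - q) / q * (q - \<rho> * B) \<le> w * (q - \<rho> * B)"
      using True by (rule mult_right_mono)
    moreover have "(B - q) / q * (B - q) + (B - q) / q * (q - \<rho> * B) + (1 - \<rho>) * B
        = (1 - \<rho>) * B\<^sup>2 / q"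
      using assms(3) by (simp add: field_simps power2_eq_square)
    moreover have "0 \<le> (1 - \<rho>) * B\<^sup>2 / q" using \<rho>(2) assms(3) by simp
    ultimately show ?thesis using lower by linarith
  next
    case False
    then have "(s\<^sup>2 - 1) * (q - \<rho> * B) \<le> w * (q - \<rho> * B)"
      using assms(6) by (intro mult_right_mono_neg) simp_all
    moreover have "(B - q) / q * (B - q) + (s\<^sup>2 - 1) * (q - \<rho> * B) + (1 - \<rho>) * B
        = (B - s * q)\<^sup>2 / q"
      using assms(3) \<rho>(1)[symmetric] by (simp add: field_simps power2_eq_square)
    moreover have "0 \<le> (B - s * q)\<^sup>2 / q" using assms(3) by simp
    ultimately show ?thesis using lower by linarith
  qed
qed

lemma greedy_tradeoff:
  fixes a w k :: nat and q B Y :: real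
  assumes "1 \<le> k" "0 < q" "0 \<le> B" "a \<le> w" "w \<le> k"
    and Y: "a * B + (real w - a) * q \<le> Y"
    and partial_count: "q \<le> B \<Longrightarrow> B < (real a + 1) * q"
    and full_count: "q \<le> B \<Longrightarrow> w = k \<Longrightarrow> B \<le> a * q"
  shows "(2 / sqrt k - 1 / k) * w * B \<le> Y + (1 - (2 / sqrt k - 1 / k)) * (if w < k then B else 0)"
proof -
  define \<rho> where "\<rho> = 2 / sqrt k - 1 / k"
  define s where "s = sqrt k"
  have s: "s\<^sup>2 = k" "0 < s" using assms(1) by (simp_all add: s_def)
  have \<rho>_s: "\<rho> * s\<^sup>2 = 2 * s - 1"
    using s assms(1) by (simp add: \<rho>_def s_def[symmetric] field_simps power2_eq_square)
  have \<rho>: "0 \<le> \<rho>" "\<rho> \<le> 1" using sqrt_guarantee_bounds[of k] assms(1) by (simp_all add: \<rho>_def)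
  consider (small) "B < q" | (partial) "q \<le> B" "w < k" | (full) "q \<le> B" "w = k"
    using assms(5) by linarith
  then have "\<rho> * w * B \<le> Y + (1 - \<rho>) * (if w < k then B else 0)"
  proof cases
    case small
    have "real w * B = a * B + (real w - a) * B" by (simp add: algebra_simps)
    also have "\<dots> \<le> a * B + (real w - a) * q"
      using small assms(4) by (intro add_left_mono mult_left_mono) simp_all
    finally have "real w * B \<le> Y" using Y by linarith
    moreover have "\<rho> * (w * B) \<le> 1 * (w * B)" using \<rho>(2) assms(3) by (intro mult_right_mono) simp_all
    moreover have "0 \<le> (1 - \<rho>) * (if w < k then B else 0)" using \<rho>(2) assms(3) by simp
    ultimately show ?thesis by linarith
  next
    case partial
    then have "real w \<le> s\<^sup>2 - 1" using s(1) by linarith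
    then show ?thesis
      using partial_tradeoff[OF \<rho>_s \<rho>(2) assms(2) \<open>q \<le> B\<close> _ _ partial_count[OF \<open>q \<le> B\<close>] Y]
        assms(4) partial by simp
  next
    case full
    then show ?thesis
      using full_tradeoff[OF \<rho>_s assms(2) \<open>q \<le> B\<close> full_count, of Y] Y s(1) by simp
  qed
  then show ?thesis by (simp add: \<rho>_def)
qed

section \<open>An invariant of GJCR runs\<close>

locale election =
  fixes C :: "'c set" and n k :: nat and A :: "nat \<Rightarrow> 'c set"
  assumes valid: "is_instance C n A k" and voters_pos: "0 < n"
begin

abbreviation support :: "'c \<Rightarrow> real" where
  "support c \<equiv> real (card (supporters n A c))"

definition quota :: real where
  "quota = real n / real k"

lemma finite_candidates: "finite C" and committee_size_pos: "1 \<le> k"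
  using valid by (simp_all add: is_instance_def)

lemma quota_pos: "0 < quota"
  using voters_pos committee_size_pos by (simp add: quota_def)

lemma supporters_subset_voters: "supporters n A c \<subseteq> voters n"
  by (auto simp: supporters_def)

lemma support_le_voters: "support c \<le> n"
  using card_supporters_le[of n A c] by simp

lemma triple_of_supporters:
  assumes "c \<in> C - W" "finite W" "(card W + 1) * quota \<le> support c"
  shows "gjcr_triple C n A k W c (card W + 1) (supporters n A c)"
proof -
  have "(card W + 1) * quota \<le> n" using assms(3) support_le_voters[of c] by simp
  then have "real (card W + 1) * n \<le> real k * n"
    using committee_size_pos by (simp add: quota_def field_simps)
  then have "card W + 1 \<le> k"
    using voters_pos by (simp only: mult_le_cancel_right of_nat_le_iff)
  moreover have "card (A i \<inter> W) < card W + 1" for i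
    using assms(2) card_mono[of W "A i \<inter> W"] by simp
  ultimately show ?thesis
    using assms(1,3) by (simp add: gjcr_triple_def quota_def)
qed

text \<open>In the invariant below, G is the size of the group N' used in the last step
  (n + 1 before the first step). Every selected candidate costs 1, split
  equally over its group; \<open>\<phi> i\<close> is the resulting load of voter i and \<open>m i\<close> the number of
  groups containing i. \<open>\<beta>\<close> counts the steps whose group has size at least B: as group
  sizes never increase these steps form a prefix of the run, and as long as a candidate
  of support at least B is unselected, every step j with \<open>j * quota \<le> B\<close> belongs to it.
  P collects the voters of their groups.\<close>

definition triple_bound :: "'c set \<Rightarrow> real \<Rightarrow> bool" where
  "triple_bound W G \<longleftrightarrow> 0 < G \<and> (\<forall>c l N. gjcr_triple C n A k W c l N \<longrightarrow> real (card N) \<le> G)"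

definition load_scheme :: "'c set \<Rightarrow> real \<Rightarrow> (nat \<Rightarrow> real) \<Rightarrow> (nat \<Rightarrow> nat) \<Rightarrow> bool" where
  "load_scheme W G \<phi> m \<longleftrightarrow> (\<Sum>i\<in>voters n. \<phi> i) = real (card W) \<and>
     (\<forall>i\<in>voters n. \<phi> i \<le> real k / real n \<and> \<phi> i \<le> real (m i) / G \<and> m i \<le> card (A i \<inter> W))"

definition big_prefix :: "real \<Rightarrow> 'c set \<Rightarrow> real \<Rightarrow> nat \<Rightarrow> bool" where
  "big_prefix B W G \<beta> \<longleftrightarrow> (B \<le> G \<longrightarrow> \<beta> = card W) \<and> \<beta> \<le> card {c\<in>W. B \<le> support c} \<and>
     (\<forall>c\<in>C - W. B \<le> support c \<longrightarrow> (\<forall>j\<le>card W. real j * quota \<le> B \<longrightarrow> j \<le> \<beta>))"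

definition big_payers ::
    "real \<Rightarrow> real \<Rightarrow> (nat \<Rightarrow> real) \<Rightarrow> (nat \<Rightarrow> nat) \<Rightarrow> nat \<Rightarrow> nat set \<Rightarrow> bool" where
  "big_payers B G \<phi> m \<beta> P \<longleftrightarrow> P \<subseteq> voters n \<and> (0 < \<beta> \<longrightarrow> P \<noteq> {}) \<and> (\<forall>i\<in>P. 1 \<le> m i) \<and>
     (G < B \<longrightarrow> (\<forall>i\<in>P. \<phi> i < real (m i) / G)) \<and>
     (real \<beta> * quota < B \<longrightarrow> (\<forall>i\<in>P. \<phi> i < real k / real n))"

definition gjcr_invariant :: "real \<Rightarrow> 'c set \<Rightarrow> bool" where
  "gjcr_invariant B W \<longleftrightarrow> W \<subseteq> C \<and> (\<forall>c\<in>W. quota \<le> support c) \<and>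
     (\<exists>G \<phi> m \<beta> P. triple_bound W G \<and> load_scheme W G \<phi> m \<and> big_prefix B W G \<beta>
        \<and> big_payers B G \<phi> m \<beta> P)"

lemma gjcr_invariant_empty: "gjcr_invariant B {}"
proof -
  have "real (card N) \<le> n + 1" if "gjcr_triple C n A k {} c l N" for c l N
  proof -
    have "card N \<le> card (supporters n A c)"
      using that by (intro card_mono) (simp_all add: gjcr_triple_def supporters_def voters_def)
    then show ?thesis using card_supporters_le[of n A c] by simp
  qed
  then have "triple_bound {} (n + 1)" by (simp add: triple_bound_def)
  moreover have "load_scheme {} (n + 1) (\<lambda>_. 0) (\<lambda>_. 0)"
    by (simp add: load_scheme_def)
  moreover have "big_prefix B {} (n + 1) 0" "big_payers B (n + 1) (\<lambda>_. 0) (\<lambda>_. 0) 0 {}"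
    by (simp_all add: big_prefix_def big_payers_def)
  ultimately show ?thesis unfolding gjcr_invariant_def by blast
qed

end

locale greedy_step = election C n k A for C :: "'c set" and n k A +
  fixes W :: "'c set" and p :: 'c and l :: nat and N :: "nat set"
  assumes W_subset: "W \<subseteq> C"
    and step_triple: "gjcr_triple C n A k W p l N"
    and step_max: "\<And>c l' N'. gjcr_triple C n A k W c l' N' \<Longrightarrow> card N' \<le> card N"
begin

lemma finite_W: "finite W"
  using W_subset finite_candidates by (rule finite_subset)

lemma p_new: "p \<in> C" "p \<notin> W"
  using step_triple by (simp_all add: gjcr_triple_def)

lemma group_subset: "N \<subseteq> supporters n A p"
  using step_triple by (simp add: gjcr_triple_def)

lemma group_subset_voters: "N \<subseteq> voters n"
  using group_subset supporters_subset_voters by blast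

lemma level_quota_le_group: "real l * quota \<le> card N"
  using step_triple by (simp add: gjcr_triple_def quota_def)

lemma quota_le_group: "quota \<le> card N"
proof -
  have "1 \<le> l" using step_triple by (simp add: gjcr_triple_def)
  then have "quota \<le> real l * quota" using quota_pos by (simp add: mult_le_cancel_right1)
  then show ?thesis using level_quota_le_group by linarith
qed

lemma group_pos: "0 < real (card N)"
  using quota_le_group quota_pos by linarith

lemma group_le_support: "card N \<le> support p"
  using group_subset by (simp add: card_mono supporters_def voters_def)

lemma group_count_lt_level: "i \<in> N \<Longrightarrow> card (A i \<inter> W) < l"
  using step_triple by (simp add: gjcr_triple_def)

lemma level_div_group_le: "real l / card N \<le> real k / real n"
  using level_quota_le_group group_pos voters_pos committee_size_pos
  by (simp add: quota_def field_simps)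

lemma count_insert_group: "i \<in> N \<Longrightarrow> card (A i \<inter> insert p W) = card (A i \<inter> W) + 1"
proof -
  assume "i \<in> N"
  then have "p \<in> A i" using group_subset by (simp add: supporters_def subset_iff)
  then have "A i \<inter> insert p W = insert p (A i \<inter> W)" by auto
  then show ?thesis using p_new finite_W by simp
qed

lemma count_insert_mono: "card (A i \<inter> W) \<le> card (A i \<inter> insert p W)"
  using finite_W by (intro card_mono) auto

lemma triple_insert_imp_triple:
  assumes "gjcr_triple C n A k (insert p W) c l' N'"
  shows "gjcr_triple C n A k W c l' N'"
proof -
  have "card (A i \<inter> W) < l'" if "card (A i \<inter> insert p W) < l'" for i
    using that count_insert_mono[of i] by linarith
  then show ?thesis using assms by (auto simp: gjcr_triple_def)
qed

definition charge_load :: "(nat \<Rightarrow> real) \<Rightarrow> nat \<Rightarrow> real" where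
  "charge_load \<phi> i = \<phi> i + (if i \<in> N then 1 / card N else 0)"

definition charge_count :: "(nat \<Rightarrow> nat) \<Rightarrow> nat \<Rightarrow> nat" where
  "charge_count m i = m i + (if i \<in> N then 1 else 0)"

lemma triple_bound_step: "triple_bound (insert p W) (card N)"
  unfolding triple_bound_def using group_pos by (auto dest!: triple_insert_imp_triple step_max)

lemma group_le_triple_bound: "triple_bound W G \<Longrightarrow> real (card N) \<le> G"
  using step_triple by (simp add: triple_bound_def)

lemma load_le_count_div_group:
  assumes "triple_bound W G" "load_scheme W G \<phi> m" "i \<in> voters n"
  shows "\<phi> i \<le> m i / card N"
proof -
  have "\<phi> i \<le> m i / G" using assms(2,3) by (simp add: load_scheme_def)
  also have "\<dots> \<le> m i / card N"
    using group_le_triple_bound[OF assms(1)] group_pos by (simp add: frac_le)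
  finally show ?thesis .
qed

lemma succ_level_div_group_le:
  assumes "load_scheme W G \<phi> m" "i \<in> N"
  shows "real (m i + 1) / card N \<le> real k / real n"
proof -
  have "m i \<le> card (A i \<inter> W)"
    using assms group_subset_voters by (auto simp: load_scheme_def)
  then have "real (m i + 1) \<le> l" using group_count_lt_level[OF assms(2)] by simp
  then have "real (m i + 1) / card N \<le> l / card N" using group_pos by (simp add: divide_right_mono)
  then show ?thesis using level_div_group_le by linarith
qed

lemma load_scheme_step:
  assumes "triple_bound W G" "load_scheme W G \<phi> m"
  shows "load_scheme (insert p W) (card N) (charge_load \<phi>) (charge_count m)"
proof -
  have "(\<Sum>i\<in>voters n. if i \<in> N then 1 / real (card N) else 0) = (\<Sum>i\<in>N. 1 / card N)"
    using group_subset_voters sum.inter_restrict[of "voters n" "\<lambda>_. 1 / real (card N)" N]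
    by (simp add: voters_def Int_absorb1)
  also have "\<dots> = 1" using group_pos by simp
  finally have "(\<Sum>i\<in>voters n. charge_load \<phi> i) = real (card (insert p W))"
    using assms(2) p_new finite_W by (simp add: charge_load_def sum.distrib load_scheme_def)
  moreover have "charge_load \<phi> i \<le> real k / real n \<and> charge_load \<phi> i \<le> charge_count m i / card N
      \<and> charge_count m i \<le> card (A i \<inter> insert p W)" if "i \<in> voters n" for i
  proof (cases "i \<in> N")
    case True
    have "charge_load \<phi> i \<le> real (m i + 1) / card N"
      using load_le_count_div_group[OF assms that] True by (simp add: charge_load_def add_divide_distrib)
    then show ?thesis
      using succ_level_div_group_le[OF assms(2) True] True assms(2) that count_insert_group
      by (simp add: charge_count_def load_scheme_def)
  next
    case False
    then show ?thesis
      using assms(2) that load_le_count_div_group[OF assms that] count_insert_mono[of i]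
      by (force simp: load_scheme_def charge_load_def charge_count_def)
  qed
  ultimately show ?thesis by (simp add: load_scheme_def)
qed

lemma big_prefix_step:
  assumes "triple_bound W G" "big_prefix B W G \<beta>"
  shows "big_prefix B (insert p W) (card N) (if B \<le> card N then \<beta> + 1 else \<beta>)"
proof -
  have full: "B \<le> card N \<Longrightarrow> \<beta> = card W"
    using assms(2) group_le_triple_bound[OF assms(1)] by (simp add: big_prefix_def)
  have "(if B \<le> card N then \<beta> + 1 else \<beta>) \<le> card {c\<in>insert p W. B \<le> support c}"
  proof (cases "B \<le> card N")
    case True
    then have "{c\<in>insert p W. B \<le> support c} = insert p {c\<in>W. B \<le> support c}"
      using group_le_support by auto
    then show ?thesis using True assms(2) p_new finite_W by (simp add: big_prefix_def)
  next
    case False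
    have "card {c\<in>W. B \<le> support c} \<le> card {c\<in>insert p W. B \<le> support c}"
      using finite_W by (intro card_mono) auto
    then show ?thesis using False assms(2) by (simp add: big_prefix_def)
  qed
  moreover have "j \<le> (if B \<le> card N then \<beta> + 1 else \<beta>)"
    if c: "c \<in> C - insert p W" "B \<le> support c" and j: "j \<le> card (insert p W)" "j * quota \<le> B" for c j
  proof (cases "j \<le> card W")
    case True
    then show ?thesis using assms(2) c j by (auto simp: big_prefix_def)
  next
    case False
    then have j_eq: "j = card W + 1" using j(1) p_new finite_W by simp
    then have "card W * quota \<le> j * quota" using quota_pos by simp
    then have "card W * quota \<le> B" using j(2) by linarith
    then have "card W \<le> \<beta>" using assms(2) c by (auto simp: big_prefix_def)
    have "gjcr_triple C n A k W c (card W + 1) (supporters n A c)"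
      using c j j_eq finite_W by (intro triple_of_supporters) auto
    then have "card (supporters n A c) \<le> card N" by (rule step_max)
    then have "B \<le> card N" using c(2) of_nat_mono by fastforce
    then show ?thesis using \<open>card W \<le> \<beta>\<close> j_eq by simp
  qed
  moreover have "B \<le> card N \<longrightarrow> \<beta> + 1 = card (insert p W)" using full p_new finite_W by simp
  ultimately show ?thesis unfolding big_prefix_def by auto
qed

lemma big_payer_load_lt:
  assumes "triple_bound W G" "load_scheme W G \<phi> m" "big_payers B G \<phi> m \<beta> P"
    and "real (card N) < B" "i \<in> P"
  shows "\<phi> i < m i / card N"
proof (cases "G < B")
  case True
  then have "\<phi> i < m i / G" using assms(3,5) by (simp add: big_payers_def)
  also have "\<dots> \<le> m i / card N"
    using group_le_triple_bound[OF assms(1)] group_pos by (simp add: frac_le)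
  finally show ?thesis .
next
  case False
  have "i \<in> voters n" "1 \<le> m i" using assms(3,5) by (auto simp: big_payers_def)
  then have "\<phi> i \<le> m i / G" using assms(2) by (simp add: load_scheme_def)
  also have "\<dots> < m i / card N"
    using False assms(4) group_pos \<open>1 \<le> m i\<close> by (simp add: divide_strict_left_mono)
  finally show ?thesis .
qed

lemma big_payers_step_large_group:
  assumes "triple_bound W G" "load_scheme W G \<phi> m" "big_prefix B W G \<beta>"
    and "big_payers B G \<phi> m \<beta> P" and large: "B \<le> card N"
  shows "big_payers B (card N) (charge_load \<phi>) (charge_count m) (\<beta> + 1) (P \<union> N)"
proof -
  have \<beta>: "\<beta> = card W"
    using assms(3) large group_le_triple_bound[OF assms(1)] by (simp add: big_prefix_def)
  have "charge_load \<phi> i < real k / real n" if "(\<beta> + 1) * quota < B" "i \<in> P \<union> N" for i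
  proof (cases "i \<in> N")
    case True
    have "0 \<le> (\<beta> + 1) * quota" using quota_pos by simp
    then have "0 < B" using that(1) by linarith
    have "m i \<le> card W"
      using assms(2) True group_subset_voters card_mono[OF finite_W, of "A i \<inter> W"]
      by (force simp: load_scheme_def)
    have "charge_load \<phi> i \<le> real (m i + 1) / card N"
      using load_le_count_div_group[OF assms(1,2)] True group_subset_voters
      by (force simp: charge_load_def add_divide_distrib)
    also have "\<dots> \<le> (\<beta> + 1) / card N"
      using \<open>m i \<le> card W\<close> \<beta> group_pos by (simp add: divide_right_mono)
    also have "\<dots> \<le> (\<beta> + 1) / B" using large \<open>0 < B\<close> by (simp add: frac_le)
    also have "\<dots> < 1 / quota" using that(1) \<open>0 < B\<close> quota_pos by (simp add: field_simps)
    finally show ?thesis by (simp add: quota_def)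
  next
    case False
    then have "real \<beta> * quota < B" "i \<in> P" using that quota_pos by (simp_all add: algebra_simps)
    then show ?thesis using assms(4) False by (simp add: big_payers_def charge_load_def)
  qed
  then show ?thesis
    using assms(4) large group_subset_voters group_pos
    by (auto simp: big_payers_def charge_count_def)
qed

lemma big_payers_step_small_group:
  assumes "triple_bound W G" "load_scheme W G \<phi> m" "big_payers B G \<phi> m \<beta> P"
    and small: "real (card N) < B"
  shows "big_payers B (card N) (charge_load \<phi>) (charge_count m) \<beta> P"
proof -
  have less: "charge_load \<phi> i < charge_count m i / card N" if "i \<in> P" for i
    using big_payer_load_lt[OF assms that]
    by (simp add: charge_load_def charge_count_def add_divide_distrib)
  have "charge_load \<phi> i < real k / real n" if "real \<beta> * quota < B" "i \<in> P" for i
  proof (cases "i \<in> N")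
    case True
    then show ?thesis
      using less[OF that(2)] succ_level_div_group_le[OF assms(2) True] by (simp add: charge_count_def)
  next
    case False
    then show ?thesis using assms(3) that by (simp add: big_payers_def charge_load_def)
  qed
  then show ?thesis
    using assms(3) less by (auto simp: big_payers_def charge_count_def)
qed

lemma gjcr_invariant_step:
  assumes "gjcr_invariant B W"
  shows "gjcr_invariant B (insert p W)"
proof -
  obtain G \<phi> m \<beta> P where tb: "triple_bound W G" and ls: "load_scheme W G \<phi> m"
    and bp: "big_prefix B W G \<beta>" and bpay: "big_payers B G \<phi> m \<beta> P"
    using assms by (auto simp: gjcr_invariant_def)
  have "big_payers B (card N) (charge_load \<phi>) (charge_count m)
      (if B \<le> card N then \<beta> + 1 else \<beta>) (if B \<le> card N then P \<union> N else P)"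
    using big_payers_step_large_group[OF tb ls bp bpay] big_payers_step_small_group[OF tb ls bpay]
    by (cases "B \<le> card N") simp_all
  moreover have "\<forall>c\<in>insert p W. quota \<le> support c"
    using assms quota_le_group group_le_support by (auto simp: gjcr_invariant_def)
  ultimately show ?thesis
    using W_subset p_new triple_bound_step load_scheme_step[OF tb ls] big_prefix_step[OF tb bp]
    unfolding gjcr_invariant_def by blast
qed

end

context election
begin

lemma gjcr_invariant_reach:
  assumes "gjcr_reach C n A k W"
  shows "gjcr_invariant B W"
  using assms
proof (induction rule: gjcr_reach.induct)
  case start
  show ?case by (rule gjcr_invariant_empty)
next
  case (step W W')
  then obtain p l N where "gjcr_triple C n A k W p l N" "W' = insert p W"
    and "\<And>c l' N'. gjcr_triple C n A k W c l' N' \<Longrightarrow> card N' \<le> card N"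
    unfolding gjcr_step_def by blast
  moreover have "W \<subseteq> C" using step.IH by (simp add: gjcr_invariant_def)
  ultimately interpret greedy_step C n k A W p l N
    by unfold_locales
  show ?case using gjcr_invariant_step[OF step.IH] \<open>W' = insert p W\<close> by simp
qed

lemma load_sum_le_committee_size:
  assumes "\<forall>i\<in>voters n. \<phi> i \<le> real k / real n"
  shows "(\<Sum>i\<in>voters n. \<phi> i) \<le> k"
proof -
  have "(\<Sum>i\<in>voters n. \<phi> i) \<le> (\<Sum>i\<in>voters n. real k / real n)"
    using assms by (intro sum_mono) auto
  also have "\<dots> = k" using voters_pos by (simp add: voters_def)
  finally show ?thesis .
qed

lemma gjcr_invariant_card_le:
  assumes "gjcr_invariant B W"
  shows "card W \<le> k"
proof -
  obtain G \<phi> m where "load_scheme W G \<phi> m" using assms by (auto simp: gjcr_invariant_def)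
  then show ?thesis
    using load_sum_le_committee_size[of \<phi>] by (simp add: load_scheme_def)
qed

lemma gjcr_output_large_count:
  assumes "gjcr_output C n A k W" "c0 \<in> C - W" "B \<le> support c0"
  shows "B < (real (card {c\<in>W. B \<le> support c}) + 1) * quota"
proof (rule ccontr)
  let ?a = "card {c\<in>W. B \<le> support c}"
  assume "\<not> ?thesis"
  then have a_quota: "real (?a + 1) * quota \<le> B" by (simp add: add.commute)
  have reach: "gjcr_reach C n A k W" and final: "\<And>c l N'. \<not> gjcr_triple C n A k W c l N'"
    using assms(1) by (auto simp: gjcr_output_def)
  obtain G \<beta> where "big_prefix B W G \<beta>" and "W \<subseteq> C"
    using gjcr_invariant_reach[OF reach, of B] by (auto simp: gjcr_invariant_def)
  then have \<beta>: "\<beta> \<le> ?a" "\<And>j. j \<le> card W \<Longrightarrow> j * quota \<le> B \<Longrightarrow> j \<le> \<beta>"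
    using assms(2,3) by (auto simp: big_prefix_def)
  have finite_W: "finite W" using \<open>W \<subseteq> C\<close> finite_candidates by (rule finite_subset)
  have "?a \<le> card W" using finite_W by (intro card_mono) auto
  show False
  proof (cases "?a + 1 \<le> card W")
    case True
    then show False using \<beta> a_quota by fastforce
  next
    case False
    then have "?a = card W" using \<open>?a \<le> card W\<close> by simp
    then have "gjcr_triple C n A k W c0 (card W + 1) (supporters n A c0)"
      using assms(2,3) a_quota finite_W by (intro triple_of_supporters) auto
    then show False using final by blast
  qed
qed

lemma gjcr_invariant_full_large_count:
  assumes "gjcr_invariant B W" "card W = k" "c0 \<in> C - W" "quota \<le> B" "B \<le> support c0"
  shows "B \<le> card {c\<in>W. B \<le> support c} * quota"
proof (rule ccontr)
  let ?a = "card {c\<in>W. B \<le> support c}"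
  assume "\<not> B \<le> ?a * quota"
  obtain G \<phi> m \<beta> P where ls: "load_scheme W G \<phi> m" and bp: "big_prefix B W G \<beta>"
    and bpay: "big_payers B G \<phi> m \<beta> P"
    using assms(1) by (auto simp: gjcr_invariant_def)
  have "\<beta> * quota \<le> ?a * quota" using bp quota_pos by (simp add: big_prefix_def)
  then have "\<beta> * quota < B" using \<open>\<not> B \<le> ?a * quota\<close> by linarith
  moreover have "1 \<le> \<beta>"
    using bp assms committee_size_pos by (auto simp: big_prefix_def)
  ultimately obtain i where "i \<in> voters n" "\<phi> i < real k / real n"
    using bpay by (auto simp: big_payers_def)
  then have "(\<Sum>i\<in>voters n. \<phi> i) < (\<Sum>i\<in>voters n. real k / real n)"
    using ls by (intro sum_strict_mono_ex1) (auto simp: load_scheme_def voters_def)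
  also have "\<dots> = card W" using voters_pos assms(2) by (simp add: voters_def)
  finally show False using ls by (simp add: load_scheme_def)
qed

section \<open>Comparison with an optimal committee\<close>

text \<open>The 0 makes the value 0 when no candidate is left outside W.\<close>
definition max_outside_support :: "'c set \<Rightarrow> real" where
  "max_outside_support W = Max (insert 0 (support ` (C - W)))"

lemma support_le_max_outside: "c \<in> C - W \<Longrightarrow> support c \<le> max_outside_support W"
  and max_outside_support_nonneg: "0 \<le> max_outside_support W"
  using finite_candidates by (simp_all add: max_outside_support_def)

lemma max_outside_support_attained:
  assumes "0 < max_outside_support W"
  shows "\<exists>c\<in>C - W. support c = max_outside_support W"
  using Max_in[of "insert 0 (support ` (C - W))"] finite_candidates assms
  by (auto simp: max_outside_support_def)

lemma av_completionE:
  assumes "av_completion C n A k W Wb" "W \<subseteq> C"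
  obtains T where "T \<subseteq> C - W" "card T = k - card W"
    and "\<And>T'. T' \<subseteq> C - W \<Longrightarrow> card T' = k - card W \<Longrightarrow> sum support T' \<le> sum support T"
    and "sw n A Wb = sum support W + sum support T"
proof -
  obtain T where T: "T \<subseteq> C - W" "card T = k - card W" "Wb = W \<union> T"
    and T_max: "\<And>T'. T' \<subseteq> C - W \<Longrightarrow> card T' = k - card W \<Longrightarrow>
      (\<Sum>c\<in>T'. card (supporters n A c)) \<le> (\<Sum>c\<in>T. card (supporters n A c))"
    using assms(1) unfolding av_completion_def by blast
  have "finite W" "finite T" "W \<inter> T = {}"
    using assms(2) T(1) finite_candidates by (auto intro: finite_subset)
  then have "sw n A Wb = sum support W + sum support T"
    using T(3) by (simp add: sw_eq_sum_card_supporters sum.union_disjoint)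
  moreover have "sum support T' \<le> sum support T" if "T' \<subseteq> C - W" "card T' = k - card W" for T'
    using T_max[OF that] by (simp flip: of_nat_sum)
  ultimately show thesis using T(1,2) that by blast
qed

lemma av_completion_optimum_bound:
  assumes "av_completion C n A k W Wb" "W \<subseteq> C" "card W \<le> k" "Wo \<subseteq> C" "card Wo = k"
  defines "B \<equiv> max_outside_support W"
  shows "sw n A Wo \<le> sw n A Wb + (\<Sum>c\<in>W. B - min (support c) B)"
proof -
  obtain T where "T \<subseteq> C - W" "card T = k - card W"
    and "\<And>T'. T' \<subseteq> C - W \<Longrightarrow> card T' = k - card W \<Longrightarrow> sum support T' \<le> sum support T"
    and sw_Wb: "sw n A Wb = sum support W + sum support T"
    using assms(1,2) by (rule av_completionE) auto
  then have "sum support Wo \<le> sum support W + sum support T + (\<Sum>c\<in>W. B - min (support c) B)"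
    using finite_candidates assms(2-5) support_le_max_outside unfolding B_def
    by (intro sum_le_max_weight_completion) auto
  then show ?thesis
    using sw_Wb assms(4) finite_candidates by (simp add: sw_eq_sum_card_supporters finite_subset)
qed

lemma av_completion_gain:
  assumes "av_completion C n A k W Wb" "W \<subseteq> C"
  defines "B \<equiv> max_outside_support W"
  shows "(\<Sum>c\<in>W. min (support c) B) + (if card W < k then B else 0) \<le> sw n A Wb"
proof -
  obtain T where T: "T \<subseteq> C - W" "card T = k - card W"
    and T_max: "\<And>T'. T' \<subseteq> C - W \<Longrightarrow> card T' = card T \<Longrightarrow> sum support T' \<le> sum support T"
    and sw_Wb: "sw n A Wb = sum support W + sum support T"
    using assms(1,2) by (rule av_completionE) auto
  have "(if card W < k then B else 0) \<le> sum support T"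
  proof (cases "card W < k \<and> 0 < B")
    case True
    then obtain c where "c \<in> C - W" "support c = B"
      using max_outside_support_attained unfolding B_def by blast
    moreover have "T \<noteq> {}" using True T(2) by auto
    ultimately show ?thesis
      using True T(1) T_max finite_candidates
      by (auto intro!: max_weight_subset_ge_member[of "C - W"])
  next
    case False
    have "0 \<le> sum support T" by (simp add: sum_nonneg)
    then show ?thesis using False max_outside_support_nonneg[of W] by (auto simp: B_def)
  qed
  moreover have "(\<Sum>c\<in>W. min (support c) B) \<le> sum support W" by (intro sum_mono) simp
  ultimately show ?thesis using sw_Wb by linarith
qed

lemma gjcr_output_tradeoff:
  fixes B \<rho> :: real
  assumes out: "gjcr_output C n A k W"
  defines "B \<equiv> max_outside_support W" and "\<rho> \<equiv> 2 / sqrt k - 1 / k"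
  shows "\<rho> * card W * B \<le> (\<Sum>c\<in>W. min (support c) B) + (1 - \<rho>) * (if card W < k then B else 0)"
  unfolding \<rho>_def
proof (rule greedy_tradeoff)
  let ?a = "card {c\<in>W. B \<le> support c}"
  have inv: "gjcr_invariant B' W" for B'
    using out gjcr_invariant_reach by (simp add: gjcr_output_def)
  then have W: "W \<subseteq> C" "\<forall>c\<in>W. quota \<le> support c"
    by (simp_all add: gjcr_invariant_def)
  then have "finite W" using finite_candidates by (blast intro: finite_subset)
  then show "?a \<le> card W" by (intro card_mono) auto
  show "?a * B + (real (card W) - ?a) * quota \<le> (\<Sum>c\<in>W. min (support c) B)"
    using \<open>finite W\<close> W(2) by (rule sum_min_threshold_ge)
  have attained: "\<exists>c\<in>C - W. support c = B" if "quota \<le> B"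
    using max_outside_support_attained[of W] that quota_pos unfolding B_def by simp
  show "B < (real ?a + 1) * quota" if "quota \<le> B"
    using attained[OF that] gjcr_output_large_count[OF out] by fastforce
  show "B \<le> ?a * quota" if "quota \<le> B" "card W = k"
    using attained[OF that(1)] that gjcr_invariant_full_large_count[OF inv] by fastforce
  show "card W \<le> k" using inv by (rule gjcr_invariant_card_le)
qed (use committee_size_pos quota_pos max_outside_support_nonneg in \<open>auto simp: B_def\<close>)

lemma gjcr_output_completion_bound:
  assumes out: "gjcr_output C n A k W" and compl: "av_completion C n A k W Wb"
    and Wo: "Wo \<subseteq> C" "card Wo = k"
  shows "(2 / sqrt k - 1 / k) * sw n A Wo \<le> sw n A Wb"
proof -
  define \<rho> where "\<rho> = 2 / sqrt k - 1 / k"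
  define B where "B = max_outside_support W"
  define Y where "Y = (\<Sum>c\<in>W. min (support c) B)"
  define X where "X = (if card W < k then B else 0)"
  have inv: "gjcr_invariant 0 W" using out gjcr_invariant_reach by (simp add: gjcr_output_def)
  then have W: "W \<subseteq> C" "card W \<le> k" by (simp add: gjcr_invariant_def, rule gjcr_invariant_card_le)
  have "(\<Sum>c\<in>W. B - min (support c) B) = card W * B - Y" by (simp add: Y_def sum_subtractf)
  then have opt: "sw n A Wo \<le> sw n A Wb + (card W * B - Y)"
    using av_completion_optimum_bound[OF compl W Wo] by (simp add: B_def)
  have gain: "Y + X \<le> sw n A Wb"
    using av_completion_gain[OF compl W(1)] unfolding X_def Y_def B_def .
  have tradeoff: "\<rho> * card W * B \<le> Y + (1 - \<rho>) * X"
    using gjcr_output_tradeoff[OF out] unfolding \<rho>_def B_def X_def Y_def .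
  have \<rho>: "0 \<le> \<rho>" "\<rho> \<le> 1"
    using sqrt_guarantee_bounds[of k] committee_size_pos by (simp_all add: \<rho>_def)
  have "\<rho> * sw n A Wo \<le> \<rho> * sw n A Wb + (\<rho> * card W * B - \<rho> * Y)"
    using mult_left_mono[OF opt \<rho>(1)] by (simp add: algebra_simps)
  also have "\<dots> \<le> \<rho> * sw n A Wb + (1 - \<rho>) * (Y + X)"
    using tradeoff by (simp add: algebra_simps)
  also have "\<dots> \<le> \<rho> * sw n A Wb + (1 - \<rho>) * sw n A Wb"
    using gain \<rho>(2) by (simp add: mult_left_mono)
  finally show ?thesis by (simp add: \<rho>_def algebra_simps)
qed

end

theorem theorem3:
  fixes C :: "'c set" and n k :: nat and A :: "nat \<Rightarrow> 'c set" and W Wb :: "'c set"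
  assumes "is_instance C n A k"
    and "opt_sw C n A k > 0"
    and "gjcr_output C n A k W"
    and "av_completion C n A k W Wb"
  shows "util_ratio C n A k Wb \<ge> 2 / sqrt (real k) - 1 / real k"
proof -
  obtain Wo where Wo: "Wo \<subseteq> C" "card Wo = k" "opt_sw C n A k = sw n A Wo"
    using opt_sw_attained[OF assms(1)] .
  have "0 < n" using assms(2) Wo(3) by (cases n) (simp_all add: sw_def voters_def)
  then interpret election C n k A using assms(1) by unfold_locales
  have "(2 / sqrt k - 1 / k) * sw n A Wo \<le> sw n A Wb"
    using gjcr_output_completion_bound[OF assms(3,4) Wo(1,2)] .
  then show ?thesis using assms(2) Wo(3) by (simp add: util_ratio_def pos_le_divide_eq)
qed

end
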